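(* For every $n\ge1$ there is a bijection $\sigma\mapsto\sigma'$ from $\mathcal{W}^*_{2n+1}$ onto $\mathcal{C}_{2n+3}$ such that $\mathrm{drop}(\sigma')=\mathrm{des}(\sigma)+1$.
   Context: For $\sigma\in\mathfrak{S}_m$ (permutations of $[m]$), a descent is an index $i$ with $\sigma_i>\sigma_{i+1}$, with descent pair $(\sigma_i,\sigma_{i+1})$; $\mathrm{des}(\sigma)$ is the number of descents. $\mathcal{W}^*_{2n+1}$ is the set of permutations of $[2n+1]$ whose every descent pair consists of two odd entries and whose last entry is odd. A drop of $\sigma$ is a pair $(i,\sigma(i))$ with $i>\sigma(i)$; $\mathrm{drop}(\sigma)$ is the number of drops; a drop is odd-odd if both $i$ and $\sigma(i)$ are odd. $\mathcal{C}_m$ is the set of cyclic permutations of $[m]$ (consisting of a single $m$-cycle) all of whose drops are odd-odd. *)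

theory Defs
  imports "HOL-Combinatorics.Permutations"
begin

definition perms :: "nat \<Rightarrow> (nat \<Rightarrow> nat) set" where
  "perms m = {\<sigma>. \<sigma> permutes {1..m}}"

definition descents :: "nat \<Rightarrow> (nat \<Rightarrow> nat) \<Rightarrow> nat set" where
  "descents m \<sigma> = {i. 1 \<le> i \<and> i < m \<and> \<sigma> i > \<sigma> (Suc i)}"

definition des :: "nat \<Rightarrow> (nat \<Rightarrow> nat) \<Rightarrow> nat" where
  "des m \<sigma> = card (descents m \<sigma>)"

definition Wstar :: "nat \<Rightarrow> (nat \<Rightarrow> nat) set" where
  "Wstar n = {\<sigma> \<in> perms (2*n+1).
     (\<forall>i \<in> descents (2*n+1) \<sigma>. odd (\<sigma> i) \<and> odd (\<sigma> (Suc i))) \<and>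
     odd (\<sigma> (2*n+1))}"

definition drops :: "nat \<Rightarrow> (nat \<Rightarrow> nat) \<Rightarrow> nat set" where
  "drops m \<sigma> = {i \<in> {1..m}. i > \<sigma> i}"

definition drop_num :: "nat \<Rightarrow> (nat \<Rightarrow> nat) \<Rightarrow> nat" where
  "drop_num m \<sigma> = card (drops m \<sigma>)"

definition is_mcycle :: "nat \<Rightarrow> (nat \<Rightarrow> nat) \<Rightarrow> bool" where
  "is_mcycle m \<sigma> \<longleftrightarrow> (\<forall>x \<in> {1..m}. \<forall>y \<in> {1..m}. \<exists>k. (\<sigma> ^^ k) x = y)"

definition Ccyc :: "nat \<Rightarrow> (nat \<Rightarrow> nat) set" where
  "Ccyc m = {\<sigma> \<in> perms m. is_mcycle m \<sigma> \<and>
     (\<forall>i \<in> drops m \<sigma>. odd i \<and> odd (\<sigma> i))}"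

end

theory Submission
  imports Defs "HOL-Combinatorics.Cycles"
begin

(* Let N = 2n+1.  Reverse-complementing sigma in W*_N keeps parities (N+1 is even) and
   gives a permutation tau with odd first entry and odd-odd descent pairs, whose descents
   are those of sigma reflected.  Framing tau into the cycle (N+2, tau_1, ..., tau_N, N+1)
   on [N+2] makes the drops exactly N+2 -> tau_1 and tau_k -> tau_(k+1) at the descents
   of tau, so drop = des + 1 and all drops are odd-odd.  Conversely, in a cycle of
   C_(N+2) the even element N+1 cannot drop, so it is mapped to N+2, and reading the
   cycle from N+2 recovers tau. *)

subsection \<open>Cyclic permutations and lists\<close>

lemma cycle_of_list_funpow_nth:
  assumes "distinct L" "i < length L"
  shows "(cycle_of_list L ^^ j) (L ! i) = L ! ((i + j) mod length L)"
proof -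
  have "(cycle_of_list L ^^ j) (L ! i) = rotate j L ! i"
    using cyclic_rotation[OF assms(1)] assms(2) by (metis nth_map)
  also have "\<dots> = L ! ((i + j) mod length L)"
    using assms(2) by (simp add: nth_rotate add.commute)
  finally show ?thesis .
qed

lemma cycle_of_list_nth:
  assumes "distinct L" "i < length L"
  shows "cycle_of_list L (L ! i) = L ! (Suc i mod length L)"
  using cycle_of_list_funpow_nth[OF assms, of 1] by simp

lemma is_mcycle_cycle_of_list:
  assumes "distinct L" "set L = {1..m}"
  shows "is_mcycle m (cycle_of_list L)"
  unfolding is_mcycle_def
proof (intro ballI)
  fix x y assume "x \<in> {1..m}" "y \<in> {1..m}"
  then obtain i j where ij: "i < length L" "j < length L" "x = L ! i" "y = L ! j"
    using assms(2) by (metis in_set_conv_nth)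
  have "(cycle_of_list L ^^ (j + length L - i)) x = L ! ((j + length L) mod length L)"
    using cycle_of_list_funpow_nth[OF assms(1) ij(1)] ij by simp
  also have "\<dots> = y"
    using ij by simp
  finally show "\<exists>k. (cycle_of_list L ^^ k) x = y" ..
qed

lemma mcycle_support:
  assumes p: "c permutes {1..m}" and mc: "is_mcycle m c" and x: "x \<in> {1..m}"
  shows "set (support c x) = {1..m}" "least_power c x = m" "cycle_of_list (support c x) = c"
proof -
  have perm: "permutation c"
    using permutes_imp_permutation[OF finite_atLeastAtMost p] .
  have "range (\<lambda>i. (c ^^ i) x) = {1..m}"
  proof
    show "range (\<lambda>i. (c ^^ i) x) \<subseteq> {1..m}"
      using permutes_funpow[OF p] permutes_in_image x by fastforce
    show "{1..m} \<subseteq> range (\<lambda>i. (c ^^ i) x)"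
      using mc x unfolding is_mcycle_def by (metis rangeI subsetI)
  qed
  then show set_support: "set (support c x) = {1..m}"
    using support_set[OF perm] by simp
  then have "length (support c x) = card {1..m}"
    by (metis distinct_card cycle_of_permutation[OF perm])
  then show "least_power c x = m"
    by simp
  show "cycle_of_list (support c x) = c"
  proof
    fix y show "cycle_of_list (support c x) y = c y"
    proof (cases "y \<in> set (support c x)")
      case True
      then show ?thesis
        using cycle_restrict[OF perm] by simp
    next
      case False
      then show ?thesis
        using id_outside_supp[OF False] p set_support by (simp add: permutes_not_in)
    qed
  qed
qed

subsection \<open>Reverse complement\<close>

definition odd_descent_pairs :: "nat \<Rightarrow> (nat \<Rightarrow> nat) \<Rightarrow> bool" where
  "odd_descent_pairs N \<sigma> \<longleftrightarrow> (\<forall>i \<in> descents N \<sigma>. odd (\<sigma> i) \<and> odd (\<sigma> (Suc i)))"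

definition odd_head_perms :: "nat \<Rightarrow> (nat \<Rightarrow> nat) set" where
  "odd_head_perms N = {\<tau> \<in> perms N. odd (\<tau> 1) \<and> odd_descent_pairs N \<tau>}"

definition rev_compl :: "nat \<Rightarrow> (nat \<Rightarrow> nat) \<Rightarrow> nat \<Rightarrow> nat" where
  "rev_compl N \<sigma> = (\<lambda>i. if i \<in> {1..N} then N + 1 - \<sigma> (N + 1 - i) else i)"

lemma Wstar_altdef:
  "Wstar n = {\<sigma> \<in> perms (2*n+1). odd_descent_pairs (2*n+1) \<sigma> \<and> odd (\<sigma> (2*n+1))}"
  by (simp add: Wstar_def odd_descent_pairs_def)

lemma rev_compl_apply:
  assumes "i \<in> {1..N}"
  shows "rev_compl N \<sigma> i = N + 1 - \<sigma> (N + 1 - i)"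
  using assms by (simp add: rev_compl_def)

lemma permutes_reflect_in_seg:
  fixes \<sigma> :: "nat \<Rightarrow> nat"
  assumes "\<sigma> permutes {1..N}" "i \<in> {1..N}"
  shows "\<sigma> (N + 1 - i) \<in> {1..N}"
proof -
  have "N + 1 - i \<in> {1..N}"
    using assms(2) by auto
  then show ?thesis
    using permutes_in_seg[OF assms(1)] by auto
qed

lemma rev_compl_permutes:
  assumes p: "\<sigma> permutes {1..N}"
  shows "rev_compl N \<sigma> permutes {1..N}"
proof (rule inj_imp_permutes)
  note img = permutes_reflect_in_seg[OF p]
  show "rev_compl N \<sigma> i \<in> {1..N}" if "i \<in> {1..N}" for i
    using img[OF that] that by (auto simp: rev_compl_def)
  show "inj_on (rev_compl N \<sigma>) {1..N}"
  proof (rule inj_onI)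
    fix x y assume x: "x \<in> {1..N}" and y: "y \<in> {1..N}"
      and "rev_compl N \<sigma> x = rev_compl N \<sigma> y"
    then have "N + 1 - \<sigma> (N + 1 - x) = N + 1 - \<sigma> (N + 1 - y)"
      using x y by (simp add: rev_compl_apply)
    then have "\<sigma> (N + 1 - x) = \<sigma> (N + 1 - y)"
      using img[OF x] img[OF y] by (simp only: atLeastAtMost_iff) linarith
    then have "N + 1 - x = N + 1 - y"
      using permutes_inj_on[OF p] x y by (auto simp: inj_on_def)
    then show "x = y"
      using x y by auto
  qed
qed (auto simp: rev_compl_def)

lemma rev_compl_rev_compl:
  assumes p: "\<sigma> permutes {1..N}"
  shows "rev_compl N (rev_compl N \<sigma>) = \<sigma>"
proof
  fix i show "rev_compl N (rev_compl N \<sigma>) i = \<sigma> i"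
  proof (cases "i \<in> {1..N}")
    case True
    moreover have "N + 1 - i \<in> {1..N}" "N + 1 - (N + 1 - i) = i"
      using True by auto
    moreover have "\<sigma> i \<le> N"
      using permutes_in_seg[OF p True] by simp
    ultimately show ?thesis
      by (simp add: rev_compl_apply)
  next
    case False
    then have "rev_compl N (rev_compl N \<sigma>) i = i"
      unfolding rev_compl_def by (simp only: if_False)
    then show ?thesis
      using p False by (simp add: permutes_not_in)
  qed
qed

lemma rev_compl_at_step:
  assumes "1 \<le> i" "i < N"
  shows "rev_compl N \<sigma> i = N + 1 - \<sigma> (Suc (N - i))"
    and "rev_compl N \<sigma> (Suc i) = N + 1 - \<sigma> (N - i)"
  using assms by (auto simp: rev_compl_def Suc_diff_le)

lemma descents_rev_compl_iff:
  assumes p: "\<sigma> permutes {1..N}"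
  shows "i \<in> descents N (rev_compl N \<sigma>) \<longleftrightarrow> 1 \<le> i \<and> i < N \<and> N - i \<in> descents N \<sigma>"
proof (cases "1 \<le> i \<and> i < N")
  case True
  then have "\<sigma> (Suc (N - i)) \<le> N" "\<sigma> (N - i) \<le> N"
    using permutes_in_seg[OF p, of "Suc (N - i)"] permutes_in_seg[OF p, of "N - i"] by auto
  then have "rev_compl N \<sigma> (Suc i) < rev_compl N \<sigma> i \<longleftrightarrow> \<sigma> (Suc (N - i)) < \<sigma> (N - i)"
    using True rev_compl_at_step[of i N \<sigma>] by arith
  then show ?thesis
    using True by (auto simp: descents_def)
qed (auto simp: descents_def)

lemma des_rev_compl:
  assumes p: "\<sigma> permutes {1..N}"
  shows "des N (rev_compl N \<sigma>) = des N \<sigma>"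
proof -
  have "descents N (rev_compl N \<sigma>) = (\<lambda>i. N - i) ` descents N \<sigma>"
  proof (intro set_eqI iffI)
    fix i assume "i \<in> descents N (rev_compl N \<sigma>)"
    then have "N - i \<in> descents N \<sigma>" "i = N - (N - i)"
      using descents_rev_compl_iff[OF p] by auto
    then show "i \<in> (\<lambda>i. N - i) ` descents N \<sigma>" by blast
  next
    fix i assume "i \<in> (\<lambda>i. N - i) ` descents N \<sigma>"
    then obtain j where "j \<in> descents N \<sigma>" "i = N - j" by blast
    then show "i \<in> descents N (rev_compl N \<sigma>)"
      using descents_rev_compl_iff[OF p, of i] by (auto simp: descents_def)
  qed
  moreover have "inj_on (\<lambda>i. N - i) (descents N \<sigma>)"
    by (rule inj_onI) (auto simp: descents_def)
  ultimately show ?thesis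
    by (simp add: des_def card_image)
qed

lemma odd_compl_iff: "odd (N::nat) \<Longrightarrow> x \<le> N \<Longrightarrow> odd (N + 1 - x) \<longleftrightarrow> odd x"
  by presburger

lemma odd_rev_compl_iff:
  assumes "odd N" "\<sigma> permutes {1..N}" "i \<in> {1..N}"
  shows "odd (rev_compl N \<sigma> i) \<longleftrightarrow> odd (\<sigma> (N + 1 - i))"
proof -
  have "\<sigma> (N + 1 - i) \<le> N"
    using permutes_reflect_in_seg[OF assms(2,3)] by simp
  then show ?thesis
    using assms(1,3) by (simp add: rev_compl_apply odd_compl_iff)
qed

lemma odd_descent_pairs_rev_compl:
  assumes oN: "odd N" and p: "\<sigma> permutes {1..N}" and od: "odd_descent_pairs N \<sigma>"
  shows "odd_descent_pairs N (rev_compl N \<sigma>)"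
  unfolding odd_descent_pairs_def
proof
  fix i assume "i \<in> descents N (rev_compl N \<sigma>)"
  then have i: "1 \<le> i" "i < N" "N - i \<in> descents N \<sigma>"
    using descents_rev_compl_iff[OF p] by auto
  then have "odd (\<sigma> (N + 1 - i))" "odd (\<sigma> (N + 1 - Suc i))"
    using od by (auto simp: odd_descent_pairs_def Suc_diff_le)
  then show "odd (rev_compl N \<sigma> i) \<and> odd (rev_compl N \<sigma> (Suc i))"
    using i odd_rev_compl_iff[OF oN p] by simp
qed

lemma bij_betw_rev_compl:
  "bij_betw (rev_compl (2*n+1)) (Wstar n) (odd_head_perms (2*n+1))"
proof (rule bij_betw_byWitness[where f' = "rev_compl (2*n+1)"])
  let ?N = "2*n+1"
  have oN: "odd ?N" by simp
  have odd_ends: "odd (rev_compl ?N \<sigma> 1) \<longleftrightarrow> odd (\<sigma> ?N)"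
    "odd (rev_compl ?N \<sigma> ?N) \<longleftrightarrow> odd (\<sigma> 1)" if "\<sigma> permutes {1..?N}" for \<sigma>
    using odd_rev_compl_iff[OF oN that, of 1] odd_rev_compl_iff[OF oN that, of ?N] by auto
  show "rev_compl ?N ` Wstar n \<subseteq> odd_head_perms ?N"
    using rev_compl_permutes odd_descent_pairs_rev_compl[OF oN] odd_ends
    by (auto simp: Wstar_altdef odd_head_perms_def perms_def)
  show "rev_compl ?N ` odd_head_perms ?N \<subseteq> Wstar n"
    using rev_compl_permutes odd_descent_pairs_rev_compl[OF oN] odd_ends
    by (auto simp: Wstar_altdef odd_head_perms_def perms_def)
qed (use rev_compl_rev_compl in \<open>auto simp: Wstar_def odd_head_perms_def perms_def\<close>)

subsection \<open>Framing a permutation into a cycle\<close>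

definition framed_list :: "nat \<Rightarrow> (nat \<Rightarrow> nat) \<Rightarrow> nat list" where
  "framed_list N \<tau> = (N + 2) # map \<tau> [1..<N+1] @ [N + 1]"

definition framed_cycle :: "nat \<Rightarrow> (nat \<Rightarrow> nat) \<Rightarrow> nat \<Rightarrow> nat" where
  "framed_cycle N \<tau> = cycle_of_list (framed_list N \<tau>)"

definition unframe :: "nat \<Rightarrow> (nat \<Rightarrow> nat) \<Rightarrow> nat \<Rightarrow> nat" where
  "unframe N c = (\<lambda>k. if k \<in> {1..N} then (c ^^ k) (N + 2) else k)"

lemma length_framed_list [simp]: "length (framed_list N \<tau>) = N + 2"
  by (simp add: framed_list_def)

lemma framed_list_nth:
  "k \<le> N + 1 \<Longrightarrow> framed_list N \<tau> ! k = (if k = 0 then N + 2 else if k \<le> N then \<tau> k else N + 1)"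
  by (cases k) (auto simp: framed_list_def nth_append nth_map_upt simp del: upt_Suc)

lemma framed_list_permutes_iff:
  assumes outside: "\<And>k. k \<notin> {1..N} \<Longrightarrow> \<tau> k = k"
  shows "\<tau> permutes {1..N} \<longleftrightarrow> distinct (framed_list N \<tau>) \<and> set (framed_list N \<tau>) = {1..N+2}"
proof -
  have upt: "set [1..<N+1] = {1..N}"
    by auto
  have set_eq: "set (framed_list N \<tau>) = insert (N + 2) (insert (N + 1) (\<tau> ` {1..N}))"
    using upt by (auto simp: framed_list_def simp del: upt_Suc)
  have distinct_iff: "distinct (framed_list N \<tau>) \<longleftrightarrow>
      inj_on \<tau> {1..N} \<and> N + 2 \<notin> \<tau> ` {1..N} \<and> N + 1 \<notin> \<tau> ` {1..N}"
    using upt by (auto simp: framed_list_def distinct_map simp del: upt_Suc)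
  show ?thesis
  proof
    assume p: "\<tau> permutes {1..N}"
    then show "distinct (framed_list N \<tau>) \<and> set (framed_list N \<tau>) = {1..N+2}"
      using permutes_image[OF p] permutes_inj_on[OF p] set_eq distinct_iff by auto
  next
    assume "distinct (framed_list N \<tau>) \<and> set (framed_list N \<tau>) = {1..N+2}"
    then have inj: "inj_on \<tau> {1..N}" and avoid: "N + 2 \<notin> \<tau> ` {1..N}" "N + 1 \<notin> \<tau> ` {1..N}"
      and sub: "\<tau> ` {1..N} \<subseteq> {1..N+2}"
      using set_eq distinct_iff by blast+
    have "\<tau> k \<in> {1..N}" if "k \<in> {1..N}" for k
    proof -
      have img: "\<tau> k \<in> \<tau> ` {1..N}"
        using that by blast
      have "\<tau> k \<in> {1..N+2}"
        using sub img by (rule subsetD)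
      moreover have "\<tau> k \<noteq> N + 1" "\<tau> k \<noteq> N + 2"
        using img avoid by metis+
      ultimately show ?thesis
        by auto
    qed
    then show "\<tau> permutes {1..N}"
      using inj outside by (intro inj_imp_permutes) auto
  qed
qed

lemma framed_cycle_apply:
  assumes p: "\<tau> permutes {1..N}" and N: "N \<ge> 1"
  shows "framed_cycle N \<tau> (N + 2) = \<tau> 1"
    and "\<And>k. 1 \<le> k \<Longrightarrow> k < N \<Longrightarrow> framed_cycle N \<tau> (\<tau> k) = \<tau> (Suc k)"
    and "framed_cycle N \<tau> (\<tau> N) = N + 1"
    and "framed_cycle N \<tau> (N + 1) = N + 2"
proof -
  have d: "distinct (framed_list N \<tau>)"
    using framed_list_permutes_iff[OF permutes_not_in[OF p]] p by simp
  have step: "framed_cycle N \<tau> (framed_list N \<tau> ! k) = framed_list N \<tau> ! (Suc k mod (N + 2))"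
    if "k \<le> N + 1" for k
    using cycle_of_list_nth[OF d, of k] that by (simp add: framed_cycle_def)
  show "framed_cycle N \<tau> (N + 2) = \<tau> 1"
    using step[of 0] N by (simp add: framed_list_nth)
  show "framed_cycle N \<tau> (\<tau> k) = \<tau> (Suc k)" if "1 \<le> k" "k < N" for k
    using step[of k] that by (simp add: framed_list_nth)
  show "framed_cycle N \<tau> (\<tau> N) = N + 1"
    using step[of N] N by (simp add: framed_list_nth)
  show "framed_cycle N \<tau> (N + 1) = N + 2"
    using step[of "N + 1"] by (simp add: framed_list_nth)
qed

lemma drops_framed_cycle:
  assumes p: "\<tau> permutes {1..N}" and N: "N \<ge> 1"
  shows "drops (N + 2) (framed_cycle N \<tau>) = insert (N + 2) (\<tau> ` descents N \<tau>)"
proof (intro set_eqI)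
  fix x
  let ?c = "framed_cycle N \<tau>"
  note c = framed_cycle_apply[OF p N]
  have D: "descents N \<tau> \<subseteq> {1..N}"
    by (auto simp: descents_def)
  then have img_D: "\<tau> ` descents N \<tau> \<subseteq> {1..N}"
    using permutes_image[OF p] by blast
  have mem: "\<tau> k \<in> \<tau> ` descents N \<tau> \<longleftrightarrow> k \<in> descents N \<tau>" if "k \<in> {1..N}" for k
    using inj_on_image_mem_iff[OF permutes_inj_on[OF p] that D] .
  have "x = N + 2 \<or> x = N + 1 \<or> x \<in> \<tau> ` {1..N} \<or> x \<notin> {1..N+2}"
    using permutes_image[OF p] by auto
  then consider "x = N + 2" | "x = N + 1" | k where "k \<in> {1..N}" "x = \<tau> k" | "x \<notin> {1..N+2}"
    by blast
  then show "x \<in> drops (N + 2) ?c \<longleftrightarrow> x \<in> insert (N + 2) (\<tau> ` descents N \<tau>)"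
  proof cases
    case 1
    then show ?thesis
      using c(1) permutes_in_seg[OF p, of 1] N by (simp add: drops_def)
  next
    case 2
    then show ?thesis
      using c(4) img_D by (auto simp: drops_def)
  next
    case (3 k)
    show ?thesis
    proof (cases "k = N")
      case True
      then have "k \<notin> descents N \<tau>"
        by (simp add: descents_def)
      then show ?thesis
        using 3 True c(3) mem[of k] permutes_in_seg[OF p, of N] by (auto simp: drops_def)
    next
      case False
      then have "?c x = \<tau> (Suc k)" "k \<in> descents N \<tau> \<longleftrightarrow> \<tau> (Suc k) < \<tau> k"
        using 3 c(2) by (auto simp: descents_def)
      then show ?thesis
        using 3 mem[of k] permutes_in_seg[OF p, of k] by (auto simp: drops_def)
    qed
  next
    case 4
    then show ?thesis
      using img_D by (auto simp: drops_def)
  qed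
qed

lemma drop_num_framed_cycle:
  assumes p: "\<tau> permutes {1..N}" and N: "N \<ge> 1"
  shows "drop_num (N + 2) (framed_cycle N \<tau>) = des N \<tau> + 1"
proof -
  have D: "descents N \<tau> \<subseteq> {1..N}"
    by (auto simp: descents_def)
  then have "finite (descents N \<tau>)" "inj_on \<tau> (descents N \<tau>)"
    using finite_subset permutes_inj_on[OF p] inj_on_subset by blast+
  moreover have "N + 2 \<notin> \<tau> ` descents N \<tau>"
    using D permutes_in_seg[OF p] by fastforce
  ultimately show ?thesis
    unfolding drop_num_def des_def drops_framed_cycle[OF p N] by (simp add: card_image)
qed

lemma framed_cycle_drops_odd_iff:
  assumes p: "\<tau> permutes {1..N}" and N: "N \<ge> 1" and oN: "odd N"
  shows "(\<forall>x \<in> drops (N + 2) (framed_cycle N \<tau>). odd x \<and> odd (framed_cycle N \<tau> x))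
    \<longleftrightarrow> odd (\<tau> 1) \<and> odd_descent_pairs N \<tau>"
proof -
  have "\<forall>k \<in> descents N \<tau>. framed_cycle N \<tau> (\<tau> k) = \<tau> (Suc k)"
    using framed_cycle_apply(2)[OF p N] by (auto simp: descents_def)
  then show ?thesis
    unfolding drops_framed_cycle[OF p N]
    using oN framed_cycle_apply(1)[OF p N] by (simp add: odd_descent_pairs_def)
qed

lemma framed_cycle_in_Ccyc:
  assumes \<tau>: "\<tau> \<in> odd_head_perms N" and N: "N \<ge> 1" and oN: "odd N"
  shows "framed_cycle N \<tau> \<in> Ccyc (N + 2)"
proof -
  have p: "\<tau> permutes {1..N}"
    using \<tau> by (simp add: odd_head_perms_def perms_def)
  then have d: "distinct (framed_list N \<tau>)" and s: "set (framed_list N \<tau>) = {1..N+2}"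
    using framed_list_permutes_iff[OF permutes_not_in[OF p]] by simp_all
  have "framed_cycle N \<tau> permutes {1..N+2}"
    using cycle_permutes[of "framed_list N \<tau>"] s by (simp add: framed_cycle_def)
  moreover have "is_mcycle (N + 2) (framed_cycle N \<tau>)"
    using is_mcycle_cycle_of_list[OF d s] by (simp add: framed_cycle_def)
  moreover have "\<forall>x \<in> drops (N + 2) (framed_cycle N \<tau>). odd x \<and> odd (framed_cycle N \<tau> x)"
    using \<tau> framed_cycle_drops_odd_iff[OF p N oN] by (simp add: odd_head_perms_def)
  ultimately show ?thesis
    by (simp add: Ccyc_def perms_def)
qed

lemma unframe_framed_cycle:
  assumes p: "\<tau> permutes {1..N}"
  shows "unframe N (framed_cycle N \<tau>) = \<tau>"
proof
  fix k
  have d: "distinct (framed_list N \<tau>)"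
    using framed_list_permutes_iff[OF permutes_not_in[OF p]] p by simp
  show "unframe N (framed_cycle N \<tau>) k = \<tau> k"
  proof (cases "k \<in> {1..N}")
    case True
    have "(framed_cycle N \<tau> ^^ k) (framed_list N \<tau> ! 0) = framed_list N \<tau> ! (k mod (N + 2))"
      using cycle_of_list_funpow_nth[OF d, of 0] by (simp add: framed_cycle_def)
    then show ?thesis
      using True by (simp add: unframe_def framed_list_nth)
  next
    case False
    then have "unframe N (framed_cycle N \<tau>) k = k"
      unfolding unframe_def by (simp only: if_False)
    then show ?thesis
      using p False by (simp add: permutes_not_in)
  qed
qed

lemma Ccyc_even_moves_up:
  assumes c: "c \<in> Ccyc m" and i: "i \<in> {1..m}" "even i"
  shows "i < c i"
proof -
  have "c i \<noteq> i"
  proof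
    assume fixed: "c i = i"
    obtain j where j: "j \<in> {1..m}" "j \<noteq> i"
      using i by (intro that[of 1]) auto
    obtain k where "(c ^^ k) i = j"
      using c i j unfolding Ccyc_def is_mcycle_def by blast
    moreover have "(c ^^ k) i = i"
      using fixed by (induction k) auto
    ultimately show False
      using j by simp
  qed
  moreover have "i \<notin> drops m c"
    using c i by (auto simp: Ccyc_def)
  ultimately show ?thesis
    using i by (auto simp: drops_def)
qed

lemma framed_list_unframe:
  assumes c: "c \<in> Ccyc (N + 2)" and oN: "odd N"
  shows "framed_list N (unframe N c) = support c (N + 2)"
proof -
  let ?m = "N + 2"
  have p: "c permutes {1..?m}" and mc: "is_mcycle ?m c"
    using c by (simp_all add: Ccyc_def perms_def)
  have lp: "least_power c ?m = ?m"
    using mcycle_support(2)[OF p mc] by simp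
  have "N + 1 < c (N + 1)"
    using Ccyc_even_moves_up[OF c, of "N + 1"] oN by simp
  moreover have "c (N + 1) \<le> ?m"
    using permutes_in_seg[OF p, of "N + 1"] by simp
  ultimately have c_last: "c (N + 1) = ?m"
    by simp
  have "c ((c ^^ (N + 1)) ?m) = (c ^^ ?m) ?m"
    by (simp add: funpow_swap1)
  also have "\<dots> = ?m"
    using least_power_of_permutation(1)[OF permutes_imp_permutation[OF finite_atLeastAtMost p],
        of ?m]
    unfolding lp .
  also have "\<dots> = c (N + 1)"
    using c_last by simp
  finally have last: "(c ^^ (N + 1)) ?m = N + 1"
    using permutes_inj[OF p] by (simp add: inj_eq)
  show ?thesis
  proof (rule nth_equalityI)
    show "length (framed_list N (unframe N c)) = length (support c ?m)"
      using lp by simp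
    fix i assume "i < length (framed_list N (unframe N c))"
    then have i: "i \<le> N + 1"
      by simp
    have "support c ?m ! i = (c ^^ i) ?m"
      using i lp by (simp del: upt_Suc)
    then show "framed_list N (unframe N c) ! i = support c ?m ! i"
      using i last by (cases "i = N + 1") (auto simp: framed_list_nth unframe_def)
  qed
qed

lemma
  assumes c: "c \<in> Ccyc (N + 2)" and N: "N \<ge> 1" and oN: "odd N"
  shows framed_cycle_unframe: "framed_cycle N (unframe N c) = c"
    and unframe_in_odd_head_perms: "unframe N c \<in> odd_head_perms N"
proof -
  have p: "c permutes {1..N+2}" and mc: "is_mcycle (N + 2) c"
    using c by (simp_all add: Ccyc_def perms_def)
  note list = framed_list_unframe[OF c oN]
  show cyc: "framed_cycle N (unframe N c) = c"
    using mcycle_support(3)[OF p mc] list by (simp add: framed_cycle_def)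
  have "unframe N c k = k" if "k \<notin> {1..N}" for k
    using that by (auto simp: unframe_def)
  moreover have "distinct (support c (N + 2))"
    using cycle_of_permutation[OF permutes_imp_permutation[OF finite_atLeastAtMost p]] .
  ultimately have u: "unframe N c permutes {1..N}"
    using framed_list_permutes_iff list mcycle_support(1)[OF p mc] by simp
  have "\<forall>x \<in> drops (N + 2) (framed_cycle N (unframe N c)).
      odd x \<and> odd (framed_cycle N (unframe N c) x)"
    using c cyc by (simp add: Ccyc_def)
  then have "odd (unframe N c 1) \<and> odd_descent_pairs N (unframe N c)"
    using framed_cycle_drops_odd_iff[OF u N oN] by blast
  then show "unframe N c \<in> odd_head_perms N"
    using u by (simp add: odd_head_perms_def perms_def)
qed

lemma bij_betw_framed_cycle:
  assumes "N \<ge> 1" "odd N"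
  shows "bij_betw (framed_cycle N) (odd_head_perms N) (Ccyc (N + 2))"
proof (rule bij_betw_byWitness[where f' = "unframe N"])
  show "\<forall>\<tau> \<in> odd_head_perms N. unframe N (framed_cycle N \<tau>) = \<tau>"
    using unframe_framed_cycle by (simp add: odd_head_perms_def perms_def)
qed (use assms framed_cycle_unframe framed_cycle_in_Ccyc unframe_in_odd_head_perms in blast)+

theorem mainTheorem10:
  fixes n :: nat
  assumes "n \<ge> 1"
  shows "\<exists>f. bij_betw f (Wstar n) (Ccyc (2*n+3)) \<and>
    (\<forall>\<sigma> \<in> Wstar n. drop_num (2*n+3) (f \<sigma>) = des (2*n+1) \<sigma> + 1)"
proof -
  let ?N = "2*n+1"
  let ?f = "framed_cycle ?N \<circ> rev_compl ?N"
  have N: "?N \<ge> 1" and oN: "odd ?N" and m: "2*n+3 = ?N + 2"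
    by auto
  have "bij_betw ?f (Wstar n) (Ccyc (?N + 2))"
    using bij_betw_trans[OF bij_betw_rev_compl bij_betw_framed_cycle[OF N oN]] .
  moreover have "drop_num (?N + 2) (?f \<sigma>) = des ?N \<sigma> + 1" if "\<sigma> \<in> Wstar n" for \<sigma>
  proof -
    have "\<sigma> permutes {1..?N}"
      using that by (simp add: Wstar_def perms_def)
    then show ?thesis
      using drop_num_framed_cycle[OF rev_compl_permutes N] des_rev_compl by simp
  qed
  ultimately show ?thesis
    unfolding m by blast
qed

end
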